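(* Let $\mu$ be a probability measure on $\mathbb{R}^d$ absolutely continuous with respect to Lebesgue measure and $n\ge1$. The function \[ F(\mathbb{R}^d,n)\times\mathcal{K}^d\longrightarrow(\mathcal{K}^d)^{\times n},\qquad (x,K)\longmapsto K(x)=\big(K\cap C_1(x,w_K(x)),\dots,K\cap C_n(x,w_K(x))\big), \] is continuous and $S_n$-equivariant (with $S_n$ acting trivially on $\mathcal{K}^d$ in the domain and by permuting coordinates on $(\mathcal{K}^d)^{\times n}$), and for each $K\in\mathcal{K}^d$ it restricts to a map $F(\mathbb{R}^d,n)\times\{K\}\to\mathrm{EMP}_\mu(K,n)$.
   Context: $\mathcal{K}^d$ is the set of compact convex subsets of $\mathbb{R}^d$ with nonempty interior, with the Hausdorff metric; $(\mathcal{K}^d)^{\times n}$ carries the product metric. $F(\mathbb{R}^d,n)$ is the space of $n$-tuples of pairwise distinct points, $W_n=\{w\in\mathbb{R}^n:\sum w_i=0\}$; $S_n$ acts by $\sigma\cdot(x_1,\dots,x_n)=(x_{\sigma^{-1}(1)},\dots,x_{\sigma^{-1}(n)})$. $C_i(x,w)=\{p\in\mathbb{R}^d:\|p-x_i\|^2-w_i\le\|p-x_j\|^2-w_j\ \forall j\}$. Standing fact (from the literature): for every $K\in\mathcal{K}^d$ and $x\in F(\mathbb{R}^d,n)$ there are unique weights $w_K(x)\in W_n$ such that the sets $K\cap C_i(x,w_K(x))$ are convex bodies with equal $\mu$-measure. $\mathrm{EMP}_\mu(K,n)$ is the set of $(K_1,\dots,K_n)\in(\mathcal{K}^d)^{\times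 n}$ with $K=\bigcup K_i$, pairwise disjoint interiors, and $\mu(K_1)=\dots=\mu(K_n)$. *)

theory Defs
  imports "HOL-Analysis.Analysis" "HOL-Probability.Probability" "HOL-Combinatorics.Permutations"
begin

definition convex_body :: "'a::euclidean_space set \<Rightarrow> bool" where
  "convex_body K \<longleftrightarrow> compact K \<and> convex K \<and> interior K \<noteq> {}"

text \<open>Hausdorff distance (used only on nonempty compact sets).\<close>
definition hausdist :: "'a::metric_space set \<Rightarrow> 'a set \<Rightarrow> real" where
  "hausdist A B = max (SUP a\<in>A. infdist a B) (SUP b\<in>B. infdist b A)"

text \<open>n-tuples are functions on indices 0..n-1. Configuration space F(R^d,n).\<close>
definition conf_space :: "nat \<Rightarrow> (nat \<Rightarrow> 'a) set" where
  "conf_space n = {x. \<forall>i<n. \<forall>j<n. i \<noteq> j \<longrightarrow> x i \<noteq> x j}"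

definition weight_space :: "nat \<Rightarrow> (nat \<Rightarrow> real) set" where
  "weight_space n = {w. (\<forall>i\<ge>n. w i = 0) \<and> (\<Sum>i<n. w i) = 0}"

definition power_cell :: "nat \<Rightarrow> (nat \<Rightarrow> 'a::euclidean_space) \<Rightarrow> (nat \<Rightarrow> real) \<Rightarrow> nat \<Rightarrow> 'a set" where
  "power_cell n x w i = {p. \<forall>j<n. (norm (p - x i))\<^sup>2 - w i \<le> (norm (p - x j))\<^sup>2 - w j}"

definition equipart_weights ::
  "'a::euclidean_space measure \<Rightarrow> nat \<Rightarrow> 'a set \<Rightarrow> (nat \<Rightarrow> 'a) \<Rightarrow> (nat \<Rightarrow> real) \<Rightarrow> bool" where
  "equipart_weights \<mu> n K x w \<longleftrightarrow> w \<in> weight_space n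
     \<and> (\<forall>i<n. convex_body (K \<inter> power_cell n x w i))
     \<and> (\<forall>i<n. \<forall>j<n. measure \<mu> (K \<inter> power_cell n x w i) = measure \<mu> (K \<inter> power_cell n x w j))"

definition eq_weights :: "'a::euclidean_space measure \<Rightarrow> nat \<Rightarrow> 'a set \<Rightarrow> (nat \<Rightarrow> 'a) \<Rightarrow> nat \<Rightarrow> real" where
  "eq_weights \<mu> n K x = (THE w. equipart_weights \<mu> n K x w)"

definition eq_cells :: "'a::euclidean_space measure \<Rightarrow> nat \<Rightarrow> (nat \<Rightarrow> 'a) \<Rightarrow> 'a set \<Rightarrow> nat \<Rightarrow> 'a set" where
  "eq_cells \<mu> n x K i = K \<inter> power_cell n x (eq_weights \<mu> n K x) i"

definition EMP :: "'a::euclidean_space measure \<Rightarrow> 'a set \<Rightarrow> nat \<Rightarrow> (nat \<Rightarrow> 'a set) set" where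
  "EMP \<mu> K n = {Ks. (\<forall>i<n. convex_body (Ks i)) \<and> K = (\<Union>i<n. Ks i)
     \<and> (\<forall>i<n. \<forall>j<n. i \<noteq> j \<longrightarrow> interior (Ks i) \<inter> interior (Ks j) = {})
     \<and> (\<forall>i<n. \<forall>j<n. measure \<mu> (Ks i) = measure \<mu> (Ks j))}"

definition perm_act :: "(nat \<Rightarrow> nat) \<Rightarrow> (nat \<Rightarrow> 'b) \<Rightarrow> nat \<Rightarrow> 'b" where
  "perm_act \<sigma> x = (\<lambda>i. x (inv \<sigma> i))"

end

theory Submission
  imports Defs
begin

(* The weights w_K(x) depend continuously on (x, K).  Along a sequence (y_k, L_k) converging to (x, K)
   they stay bounded, and every limit point v of them equipartitions K for x: the mu-measure of a cell
   is continuous in the data, because cell boundaries lie in hyperplanes and in the frontier of K,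
   which mu does not charge, and the limit cells are convex bodies because they have positive
   measure.  Uniqueness of the weights then forces v = w_K(x).

   Continuity of the cells follows.  A cell is cut out of K by affine inequalities which hold strictly
   at some interior point c, so moving a point a small fraction of the way towards c repairs small
   violations of these inequalities and of membership in K; this bounds the Hausdorff distance between
   corresponding cells of (x, K) and of a nearby (y, L).

   Equivariance is again uniqueness of the weights, and the cells form an equipartition because power
   cells cover the space and have disjoint interiors. *)

lemma convex_bodyD:
  assumes "convex_body K"
  shows "compact K" "convex K" "K \<noteq> {}" "bounded K" "closed K"
  using assms interior_empty by (auto simp: convex_body_def compact_imp_bounded compact_imp_closed)

lemma finite_negative_margin:
  fixes f :: "'i \<Rightarrow> real"
  assumes "finite J" "\<And>j. j \<in> J \<Longrightarrow> f j < 0"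
  obtains m where "0 < m" "\<And>j. j \<in> J \<Longrightarrow> f j \<le> -m"
proof
  define m where "m = Min (insert 1 ((\<lambda>j. - f j) ` J))"
  show "0 < m" unfolding m_def using assms by (subst Min_gr_iff) auto
  show "f j \<le> -m" if "j \<in> J" for j
  proof -
    have "m \<le> - f j" unfolding m_def using assms(1) that by (intro Min_le) auto
    then show ?thesis by linarith
  qed
qed

lemma finite_pos_upper_bound:
  fixes f :: "'i \<Rightarrow> real"
  assumes "finite J"
  obtains B where "0 < B" "\<And>j. j \<in> J \<Longrightarrow> f j \<le> B"
proof
  show "0 < 1 + (\<Sum>j\<in>J. \<bar>f j\<bar>)"
    by (simp add: add_pos_nonneg sum_nonneg)
  show "f j \<le> 1 + (\<Sum>j\<in>J. \<bar>f j\<bar>)" if "j \<in> J" for j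
  proof -
    have "\<bar>f j\<bar> \<le> (\<Sum>j\<in>J. \<bar>f j\<bar>)" using assms that by (intro member_le_sum) auto
    then show ?thesis by linarith
  qed
qed

lemma eventually_all_lessThan:
  fixes n :: nat
  assumes "\<And>j. j < n \<Longrightarrow> eventually (P j) F"
  shows "eventually (\<lambda>z. \<forall>j<n. P j z) F"
proof -
  have "eventually (\<lambda>z. \<forall>j\<in>{..<n}. P j z) F"
    using assms by (intro eventually_ball_finite) auto
  then show ?thesis by (simp add: lessThan_def)
qed

lemma all_lessThan_permutes:
  assumes "\<sigma> permutes {..<n}"
  shows "(\<forall>j<n. P (\<sigma> j)) \<longleftrightarrow> (\<forall>j<n. P j)"
proof
  assume P: "\<forall>j<n. P (\<sigma> j)"
  show "\<forall>j<n. P j"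
  proof (intro allI impI)
    fix j assume "j < n"
    then have "inv \<sigma> j < n" using permutes_in_image[OF permutes_inv[OF assms]] by simp
    then have "P (\<sigma> (inv \<sigma> j))" using P by blast
    then show "P j" by (simp add: permutes_inverses(1)[OF assms])
  qed
qed (use permutes_in_image[OF assms] in auto)

lemma bounded_seq_convergent_subseq:
  fixes V :: "nat \<Rightarrow> nat \<Rightarrow> real"
  assumes "\<And>k j. j < n \<Longrightarrow> \<bar>V k j\<bar> \<le> M"
  obtains r l where "strict_mono r" "\<And>j. j < n \<Longrightarrow> (\<lambda>k. V (r k) j) \<longlonglongrightarrow> l j"
proof -
  have bnd: "bounded ((\<lambda>v. v j) ` range V)" if "j < n" for j
    using assms[OF that] unfolding bounded_iff by (auto intro!: exI[of _ M])
  have "\<forall>\<delta>\<subseteq>{..<n}. \<exists>l r. strict_mono r \<and>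
      (\<forall>e>0. eventually (\<lambda>k. \<forall>j\<in>\<delta>. dist (V (r k) j) (l j) < e) sequentially)"
    by (rule compact_lemma_general[where proj = "\<lambda>v j. v j" and unproj = id]) (use bnd in auto)
  then obtain l r where "strict_mono r"
    "\<And>e. 0 < e \<Longrightarrow> eventually (\<lambda>k. \<forall>j\<in>{..<n}. dist (V (r k) j) (l j) < e) sequentially"
    by (meson order_refl)
  moreover have "(\<lambda>k. V (r k) j) \<longlonglongrightarrow> l j" if "j < n" for j
  proof (rule tendstoI)
    fix e :: real assume "0 < e"
    show "eventually (\<lambda>k. dist (V (r k) j) (l j) < e) sequentially"
      using calculation(2)[OF \<open>0 < e\<close>] by (rule eventually_mono) (use that in auto)
  qed
  ultimately show thesis
    using that by blast
qed

section \<open>Hausdorff distance\<close>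

lemma hausdist_commute: "hausdist A B = hausdist B A"
  unfolding hausdist_def by (simp add: max.commute)

lemma bdd_above_infdist_image:
  assumes "bounded A" "B \<noteq> {}"
  shows "bdd_above ((\<lambda>a. infdist a B) ` A)"
proof -
  obtain b where b: "b \<in> B" using assms by auto
  obtain c r where "\<forall>a\<in>A. dist c a \<le> r" using assms(1) unfolding bounded_def by auto
  then have "infdist a B \<le> r + dist c b" if "a \<in> A" for a
    using infdist_le[OF b, of a] dist_triangle[of a b c] that by (auto simp: dist_commute)
  then show ?thesis by (auto intro!: bdd_aboveI)
qed

lemma infdist_le_hausdist:
  assumes "bounded A" "B \<noteq> {}" "a \<in> A"
  shows "infdist a B \<le> hausdist A B"
  unfolding hausdist_def
  using cSUP_upper[OF assms(3) bdd_above_infdist_image[OF assms(1,2)]] by simp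

lemma hausdist_nonneg:
  assumes "bounded A" "A \<noteq> {}" "B \<noteq> {}"
  shows "0 \<le> hausdist A B"
proof -
  obtain a where "a \<in> A" using assms(2) by auto
  then show ?thesis
    using infdist_le_hausdist[OF assms(1,3)] infdist_nonneg[of a B] by fastforce
qed

lemma hausdist_le:
  assumes "A \<noteq> {}" "B \<noteq> {}" "\<And>a. a \<in> A \<Longrightarrow> infdist a B \<le> e" "\<And>b. b \<in> B \<Longrightarrow> infdist b A \<le> e"
  shows "hausdist A B \<le> e"
  unfolding hausdist_def using assms by (auto intro!: cSUP_least)

lemma exists_dist_lt_hausdist:
  assumes "bounded A" "B \<noteq> {}" "a \<in> A" "hausdist A B < d"
  obtains b where "b \<in> B" "dist a b < d"
proof -
  have "infdist a B < d" using infdist_le_hausdist[OF assms(1-3)] assms(4) by linarith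
  then show thesis using that assms(2) by (auto simp: infdist_notempty cINF_less_iff)
qed

lemma mem_if_ball_subset_hausdist:
  fixes p :: "'a::euclidean_space"
  assumes L: "convex L" "closed L" "L \<noteq> {}"
    and "bounded K" "ball p r \<subseteq> K" "hausdist K L < r" "0 < r"
  shows "p \<in> L"
proof (rule ccontr)
  assume "p \<notin> L"
  then obtain a b where ab: "a \<bullet> p < b" "\<forall>z\<in>L. b < a \<bullet> z"
    using separating_hyperplane_closed_point[OF L(1,2) \<open>p \<notin> L\<close>] by blast
  have a: "a \<noteq> 0" using ab L(3) by auto
  define s where "s = (max 0 (hausdist K L) + r) / 2"
  have s: "hausdist K L < s" "s < r" "0 < s"
    using assms(6,7) unfolding s_def by auto
  define q where "q = p - (s / norm a) *\<^sub>R a"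
  have "dist p q = s" using a s unfolding q_def by (simp add: dist_norm)
  then have "q \<in> K" using s assms(5) by auto
  have "s \<le> dist q z" if "z \<in> L" for z
  proof -
    have "a \<bullet> q = a \<bullet> p - s * norm a"
      unfolding q_def using a
      by (simp add: inner_diff_right power2_norm_eq_inner[symmetric] power2_eq_square)
    then have "s * norm a < a \<bullet> (z - q)"
      using ab(1) bspec[OF ab(2) that] by (simp add: inner_diff_right)
    also have "\<dots> \<le> norm a * dist q z"
      using Cauchy_Schwarz_ineq2[of a "z - q"] by (simp add: dist_norm norm_minus_commute)
    finally show ?thesis using a by (simp add: mult.commute)
  qed
  then have "s \<le> infdist q L" using L(3) by (simp add: infdist_notempty cINF_greatest)
  also have "\<dots> \<le> hausdist K L" by (rule infdist_le_hausdist[OF assms(4) L(3) \<open>q \<in> K\<close>])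
  finally show False using s by linarith
qed

lemma eventually_mem_if_ball_subset:
  fixes p :: "'a::euclidean_space"
  assumes "bounded K" "ball p r \<subseteq> K" "0 < r"
    and "\<And>z. convex (L z) \<and> closed (L z) \<and> L z \<noteq> {}"
    and "((\<lambda>z. hausdist K (L z)) \<longlongrightarrow> 0) F"
  shows "eventually (\<lambda>z. p \<in> L z) F"
  using order_tendstoD(2)[OF assms(5,3)]
  by eventually_elim (use assms(1-4) mem_if_ball_subset_hausdist in blast)

lemma eventually_not_mem_if_not_mem:
  assumes "closed K" "K \<noteq> {}" "p \<notin> K" "\<And>z. bounded (L z)"
    and "((\<lambda>z. hausdist K (L z)) \<longlongrightarrow> 0) F"
  shows "eventually (\<lambda>z. p \<notin> L z) F"
  using order_tendstoD(2)[OF assms(5) infdist_pos_not_in_closed[OF assms(1-3)]]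
proof eventually_elim
  case (elim z)
  show "p \<notin> L z"
  proof
    assume "p \<in> L z"
    then have "infdist p K \<le> hausdist K (L z)"
      using infdist_le_hausdist[OF assms(4) assms(2)] by (simp add: hausdist_commute)
    with elim show False by linarith
  qed
qed

lemma eventually_mem_iff_hausdist:
  fixes K :: "'a::euclidean_space set"
  assumes "compact K" "K \<noteq> {}" "p \<notin> frontier K"
    and "\<And>z. convex (L z) \<and> compact (L z) \<and> L z \<noteq> {}"
    and "((\<lambda>z. hausdist K (L z)) \<longlongrightarrow> 0) F"
  shows "eventually (\<lambda>z. p \<in> L z \<longleftrightarrow> p \<in> K) F"
proof (cases "p \<in> K")
  case True
  then have "p \<in> interior K"
    using assms(1,3) by (simp add: frontier_def closure_closed compact_imp_closed)
  then obtain r where "0 < r" "ball p r \<subseteq> K" using mem_interior by blast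
  then show ?thesis
    using eventually_mem_if_ball_subset[of K p r L F] assms True
    by (auto simp: compact_imp_bounded compact_imp_closed elim: eventually_mono)
next
  case False
  then show ?thesis
    using eventually_not_mem_if_not_mem[of K p L F] assms
    by (auto simp: compact_imp_bounded compact_imp_closed elim: eventually_mono)
qed

section \<open>Distance to a sublevel set of convex functions\<close>

lemma ball_convex_comb_subset:
  fixes K :: "'a::real_normed_vector set"
  assumes "convex K" "a \<in> K" "ball c r \<subseteq> K" "0 < t" "t \<le> 1"
  shows "ball ((1 - t) *\<^sub>R a + t *\<^sub>R c) (t * r) \<subseteq> K"
proof
  define q where "q = (1 - t) *\<^sub>R a + t *\<^sub>R c"
  fix z assume "z \<in> ball ((1 - t) *\<^sub>R a + t *\<^sub>R c) (t * r)"
  then have z: "norm (z - q) < t * r"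
    by (simp add: q_def dist_norm norm_minus_commute)
  define c' where "c' = c + (1 / t) *\<^sub>R (z - q)"
  have "dist c c' = norm (z - q) / t"
    using assms(4) by (simp add: c'_def dist_norm)
  also have "\<dots> < r"
    using z assms(4) by (simp add: field_simps)
  finally have "c' \<in> K" using assms(3) by auto
  moreover have "z = (1 - t) *\<^sub>R a + t *\<^sub>R c'"
    using assms(4) by (simp add: c'_def q_def algebra_simps)
  ultimately show "z \<in> K"
    using convexD_alt[OF assms(1,2)] assms(4,5) by simp
qed

lemma infdist_convex_sublevel_le:
  fixes f :: "'i \<Rightarrow> 'a::real_normed_vector \<Rightarrow> real"
  assumes "convex K" "k \<in> K" "c \<in> K" "0 < m" "0 \<le> \<eta>"
    and f: "\<And>j. j \<in> J \<Longrightarrow> convex_on K (f j)"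
    and c: "\<And>j. j \<in> J \<Longrightarrow> f j c \<le> -m" and k: "\<And>j. j \<in> J \<Longrightarrow> f j k \<le> \<eta>"
  shows "infdist k (K \<inter> {p. \<forall>j\<in>J. f j p \<le> 0}) \<le> \<eta> / (m + \<eta>) * dist k c"
proof -
  define s where "s = \<eta> / (m + \<eta>)"
  have s: "0 \<le> s" "s \<le> 1" "(1 - s) * \<eta> = s * m"
    using assms(4,5) by (auto simp: s_def field_simps)
  define q where "q = (1 - s) *\<^sub>R k + s *\<^sub>R c"
  have "f j q \<le> 0" if "j \<in> J" for j
  proof -
    have "f j q \<le> (1 - s) * f j k + s * f j c"
      unfolding q_def using convex_onD[OF f[OF that]] s assms(2,3) by simp
    also have "\<dots> \<le> (1 - s) * \<eta> + s * (- m)"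
      using k[OF that] c[OF that] s by (intro add_mono mult_left_mono) auto
    finally show ?thesis using s(3) by simp
  qed
  moreover have "q \<in> K"
    unfolding q_def using convexD_alt[OF assms(1,2,3)] s by simp
  ultimately have "infdist k (K \<inter> {p. \<forall>j\<in>J. f j p \<le> 0}) \<le> dist k q"
    by (intro infdist_le) auto
  also have "dist k q = s * dist k c"
  proof -
    have "k - q = s *\<^sub>R (k - c)" unfolding q_def by (simp add: algebra_simps)
    then show ?thesis using s(1) by (simp add: dist_norm)
  qed
  finally show ?thesis unfolding s_def .
qed

lemma infdist_perturbed_sublevel_le:
  fixes f g :: "'i \<Rightarrow> 'a::euclidean_space \<Rightarrow> real"
  assumes K: "convex K" "bounded K" "ball c r \<subseteq> K" "0 < r"
    and L: "convex L" "closed L" "L \<noteq> {}"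
    and t: "0 < t" "t \<le> 1" "hausdist K L < t * r"
    and f: "\<And>j. j \<in> J \<Longrightarrow> convex_on K (f j)" "\<And>j. j \<in> J \<Longrightarrow> f j c \<le> -m"
    and g: "\<And>j p. j \<in> J \<Longrightarrow> p \<in> K \<Longrightarrow> g j p < f j p + t * m"
    and a: "a \<in> K" "\<And>j. j \<in> J \<Longrightarrow> f j a \<le> 0"
  shows "infdist a (L \<inter> {p. \<forall>j\<in>J. g j p \<le> 0}) \<le> t * dist a c"
proof -
  define q where "q = (1 - t) *\<^sub>R a + t *\<^sub>R c"
  have ball: "ball q (t * r) \<subseteq> K"
    unfolding q_def by (rule ball_convex_comb_subset[OF K(1) a(1) K(3) t(1,2)])
  then have "q \<in> K" using t(1) K(4) by auto
  have "c \<in> K" using K(3,4) by auto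
  have "g j q \<le> 0" if "j \<in> J" for j
  proof -
    have "f j q \<le> (1 - t) * f j a + t * f j c"
      unfolding q_def using convex_onD[OF f(1)[OF that]] t a(1) \<open>c \<in> K\<close> by simp
    also have "\<dots> \<le> (1 - t) * 0 + t * (- m)"
      using a(2)[OF that] f(2)[OF that] t by (intro add_mono mult_left_mono) auto
    finally show ?thesis using g[OF that \<open>q \<in> K\<close>] by linarith
  qed
  moreover have "q \<in> L"
    using mem_if_ball_subset_hausdist[OF L K(2) ball t(3)] t(1) K(4) by simp
  ultimately have "infdist a (L \<inter> {p. \<forall>j\<in>J. g j p \<le> 0}) \<le> dist a q"
    by (intro infdist_le) auto
  also have "dist a q = t * dist a c"
  proof -
    have "a - q = t *\<^sub>R (a - c)" unfolding q_def by (simp add: algebra_simps)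
    then show ?thesis using t(1) by (simp add: dist_norm)
  qed
  finally show ?thesis .
qed

section \<open>Power cells\<close>

definition power_diff :: "(nat \<Rightarrow> 'a::euclidean_space) \<Rightarrow> (nat \<Rightarrow> real) \<Rightarrow> nat \<Rightarrow> nat \<Rightarrow> 'a \<Rightarrow> real" where
  "power_diff x w i j p = ((norm (p - x i))\<^sup>2 - w i) - ((norm (p - x j))\<^sup>2 - w j)"

lemma power_cell_eq: "power_cell n x w i = {p. \<forall>j<n. power_diff x w i j p \<le> 0}"
  unfolding power_cell_def power_diff_def by auto

lemma power_cell_eq_others:
  "power_cell n x w i = {p. \<forall>j\<in>{j. j < n \<and> j \<noteq> i}. power_diff x w i j p \<le> 0}"
  unfolding power_cell_eq by (auto simp: power_diff_def)

lemma power_diff_eq: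
  "power_diff x w i j p = 2 * (p \<bullet> (x j - x i)) + (norm (x i))\<^sup>2 - (norm (x j))\<^sup>2 - w i + w j"
  unfolding power_diff_def
  by (simp add: power2_norm_eq_inner inner_diff_left inner_diff_right inner_commute algebra_simps)

lemma power_diff_self [simp]: "power_diff x w i i p = 0"
  unfolding power_diff_def by simp

lemma power_diff_swap: "power_diff x w j i p = - power_diff x w i j p"
  unfolding power_diff_def by simp

lemma power_diff_convex_comb:
  "power_diff x w i j ((1 - t) *\<^sub>R a + t *\<^sub>R c) = (1 - t) * power_diff x w i j a + t * power_diff x w i j c"
  unfolding power_diff_eq by (simp add: inner_add_left algebra_simps)

lemma convex_on_power_diff: "convex S \<Longrightarrow> convex_on S (power_diff x w i j)"
  by (rule convex_onI) (simp_all add: power_diff_convex_comb)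

lemma power_diff_lipschitz:
  "power_diff x w i j p \<le> power_diff x w i j q + 2 * norm (x j - x i) * dist p q"
proof -
  have "power_diff x w i j p - power_diff x w i j q = 2 * ((p - q) \<bullet> (x j - x i))"
    unfolding power_diff_eq by (simp add: inner_diff_left algebra_simps)
  also have "\<dots> \<le> 2 * (norm (p - q) * norm (x j - x i))"
    using norm_cauchy_schwarz[of "p - q" "x j - x i"] by simp
  finally show ?thesis by (simp add: dist_norm algebra_simps)
qed

lemma power_diff_perturb:
  "\<bar>power_diff y v i j p - power_diff x w i j p\<bar> \<le>
     2 * norm p * (norm (y i - x i) + norm (y j - x j))
     + \<bar>(norm (y i))\<^sup>2 - (norm (x i))\<^sup>2\<bar> + \<bar>(norm (y j))\<^sup>2 - (norm (x j))\<^sup>2\<bar>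
     + \<bar>v i - w i\<bar> + \<bar>v j - w j\<bar>"
proof -
  have "\<bar>p \<bullet> ((y j - x j) - (y i - x i))\<bar> \<le> norm p * norm ((y j - x j) - (y i - x i))"
    by (rule Cauchy_Schwarz_ineq2)
  also have "\<dots> \<le> norm p * (norm (y i - x i) + norm (y j - x j))"
    by (intro mult_left_mono norm_triangle_ineq4[THEN order_trans]) auto
  finally have "\<bar>p \<bullet> ((y j - x j) - (y i - x i))\<bar> \<le> norm p * (norm (y i - x i) + norm (y j - x j))" .
  moreover have "power_diff y v i j p - power_diff x w i j p =
      2 * (p \<bullet> ((y j - x j) - (y i - x i))) + ((norm (y i))\<^sup>2 - (norm (x i))\<^sup>2)
      - ((norm (y j))\<^sup>2 - (norm (x j))\<^sup>2) - (v i - w i) + (v j - w j)"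
    unfolding power_diff_eq by (simp add: inner_diff_right algebra_simps)
  ultimately show ?thesis by linarith
qed

lemma continuous_on_power_diff [continuous_intros]: "continuous_on S (power_diff x w i j)"
  unfolding power_diff_def by (intro continuous_intros)

lemma closed_power_cell: "closed (power_cell n x w i)"
proof -
  have "power_cell n x w i = (\<Inter>j\<in>{..<n}. {p. power_diff x w i j p \<le> 0})"
    unfolding power_cell_eq by auto
  then show ?thesis
    by (auto intro!: closed_INT closed_Collect_le continuous_intros)
qed

lemma convex_power_cell: "convex (power_cell n x w i)"
proof -
  have "power_cell n x w i =
      (\<Inter>j\<in>{..<n}. {p. (2 *\<^sub>R (x j - x i)) \<bullet> p \<le> (norm (x j))\<^sup>2 - (norm (x i))\<^sup>2 + w i - w j})"
    (is "_ = ?H")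
    unfolding power_cell_eq power_diff_eq by (auto simp: inner_commute algebra_simps)
  moreover have "convex ?H"
    by (intro convex_INT ballI convex_halfspace_le)
  ultimately show ?thesis
    by simp
qed

lemma power_diff_neg_if_interior:
  assumes p: "p \<in> interior (power_cell n x w i)" and "j < n" "x j \<noteq> x i"
  shows "power_diff x w i j p < 0"
proof (rule ccontr)
  assume "\<not> power_diff x w i j p < 0"
  obtain e where e: "0 < e" "ball p e \<subseteq> power_cell n x w i"
    using p by (meson mem_interior)
  define d where "d = x j - x i"
  have d: "0 < norm d" using \<open>x j \<noteq> x i\<close> unfolding d_def by simp
  define q where "q = p + (e / (2 * norm d)) *\<^sub>R d"
  have "dist p q = e / 2" using d e(1) unfolding q_def by (simp add: dist_norm)
  then have "q \<in> power_cell n x w i" using e by auto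
  then have "power_diff x w i j q \<le> 0"
    using \<open>j < n\<close> unfolding power_cell_eq by blast
  moreover have "power_diff x w i j q = power_diff x w i j p + 2 * (e / (2 * norm d)) * (norm d)\<^sup>2"
    unfolding power_diff_eq q_def d_def by (simp add: inner_add_left power2_norm_eq_inner algebra_simps)
  moreover have "0 < 2 * (e / (2 * norm d)) * (norm d)\<^sup>2" using e(1) d by simp
  ultimately show False
    using \<open>\<not> power_diff x w i j p < 0\<close> by linarith
qed

lemma interior_Int_power_cell:
  assumes "p \<in> interior K" "\<And>j. j < n \<Longrightarrow> j \<noteq> i \<Longrightarrow> power_diff x w i j p < 0"
  shows "p \<in> interior (K \<inter> power_cell n x w i)"
proof -
  define U where "U = interior K \<inter> (\<Inter>j\<in>{j. j < n \<and> j \<noteq> i}. {q. power_diff x w i j q < 0})"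
  have "open U"
    unfolding U_def by (auto intro!: open_Int open_INT open_Collect_less continuous_intros)
  moreover have "U \<subseteq> K \<inter> power_cell n x w i"
    unfolding U_def power_cell_eq using interior_subset by (auto simp: le_less)
  moreover have "p \<in> U"
    using assms unfolding U_def by auto
  ultimately show ?thesis
    by (meson interior_maximal interiorI)
qed

lemma convex_body_Int_power_cell_iff:
  assumes "convex_body K"
  shows "convex_body (K \<inter> power_cell n x w i) \<longleftrightarrow> interior (K \<inter> power_cell n x w i) \<noteq> {}"
  using assms
  by (auto simp: convex_body_def compact_Int_closed closed_power_cell convex_Int convex_power_cell)

lemma UN_power_cell:
  assumes "1 \<le> n"
  shows "(\<Union>i<n. power_cell n x w i) = UNIV"
proof -
  have ne: "{..<n} \<noteq> {}" using assms by (simp add: lessThan_empty_iff)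
  have "p \<in> power_cell n x w (arg_min_on (\<lambda>i. (norm (p - x i))\<^sup>2 - w i) {..<n})"
    and "arg_min_on (\<lambda>i. (norm (p - x i))\<^sup>2 - w i) {..<n} < n" for p
    using arg_min_if_finite[OF finite_lessThan ne, of "\<lambda>i. (norm (p - x i))\<^sup>2 - w i"]
    by (auto simp: power_cell_def not_less)
  then show ?thesis by blast
qed

lemma interior_power_cells_disjoint:
  assumes "x \<in> conf_space n" "i < n" "j < n" "i \<noteq> j"
  shows "interior (power_cell n x w i) \<inter> interior (power_cell n x w j) = {}"
proof -
  have "x j \<noteq> x i" using assms unfolding conf_space_def by auto
  then show ?thesis
    using power_diff_neg_if_interior[of _ n x w i j] power_diff_neg_if_interior[of _ n x w j i]
      power_diff_swap[of x w j i] assms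
    by fastforce
qed

lemma perm_act_in_conf_space:
  assumes "\<sigma> permutes {..<n}" "x \<in> conf_space n"
  shows "perm_act \<sigma> x \<in> conf_space n"
proof -
  have \<tau>: "inv \<sigma> permutes {..<n}" by (rule permutes_inv[OF assms(1)])
  show ?thesis
    unfolding conf_space_def perm_act_def
  proof (intro CollectI allI impI)
    fix i j assume "i < n" "j < n" "i \<noteq> j"
    then have "inv \<sigma> i \<noteq> inv \<sigma> j" "inv \<sigma> i < n" "inv \<sigma> j < n"
      using permutes_inj[OF \<tau>] permutes_in_image[OF \<tau>] by (auto dest: injD)
    then show "x (inv \<sigma> i) \<noteq> x (inv \<sigma> j)" using assms(2) unfolding conf_space_def by blast
  qed
qed

lemma power_cell_perm_act:
  assumes "\<sigma> permutes {..<n}"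
  shows "power_cell n (perm_act \<sigma> x) (perm_act \<sigma> w) i = power_cell n x w (inv \<sigma> i)"
proof -
  have "(\<forall>j<n. (norm (p - x (inv \<sigma> i)))\<^sup>2 - w (inv \<sigma> i) \<le> (norm (p - x (inv \<sigma> j)))\<^sup>2 - w (inv \<sigma> j))
    \<longleftrightarrow> (\<forall>j<n. (norm (p - x (inv \<sigma> i)))\<^sup>2 - w (inv \<sigma> i) \<le> (norm (p - x j))\<^sup>2 - w j)" for p
    by (rule all_lessThan_permutes[OF permutes_inv[OF assms],
          where P = "\<lambda>j. (norm (p - x (inv \<sigma> i)))\<^sup>2 - w (inv \<sigma> i) \<le> (norm (p - x j))\<^sup>2 - w j"])
  then show ?thesis
    unfolding power_cell_def perm_act_def by simp
qed

lemma equipart_weights_perm_act: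
  assumes "\<sigma> permutes {..<n}" "equipart_weights \<mu> n K x w"
  shows "equipart_weights \<mu> n K (perm_act \<sigma> x) (perm_act \<sigma> w)"
proof -
  have \<tau>: "inv \<sigma> permutes {..<n}" by (rule permutes_inv[OF assms(1)])
  have w: "w \<in> weight_space n"
    and cells: "\<forall>i<n. convex_body (K \<inter> power_cell n x w i)"
    and meas: "\<forall>i<n. \<forall>j<n. measure \<mu> (K \<inter> power_cell n x w i) = measure \<mu> (K \<inter> power_cell n x w j)"
    using assms(2) unfolding equipart_weights_def by blast+
  have "(\<Sum>j<n. perm_act \<sigma> w j) = (\<Sum>j<n. w j)"
    unfolding perm_act_def by (rule sum.permute[OF \<tau>, symmetric, unfolded comp_def])
  moreover have "perm_act \<sigma> w j = 0" if "n \<le> j" for j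
    using w permutes_not_in[OF \<tau>, of j] that by (simp add: perm_act_def weight_space_def)
  ultimately have "perm_act \<sigma> w \<in> weight_space n"
    using w by (simp add: weight_space_def)
  moreover have \<tau>_lt: "inv \<sigma> i < n" if "i < n" for i
    using permutes_in_image[OF \<tau>] that by simp
  ultimately show ?thesis
    unfolding equipart_weights_def power_cell_perm_act[OF assms(1)]
    using cells meas \<tau>_lt by blast
qed

lemma abs_weight_le:
  assumes "v \<in> weight_space n" "\<And>i. i < n \<Longrightarrow> L \<inter> power_cell n y v i \<noteq> {}"
    and "\<And>p. p \<in> L \<Longrightarrow> norm p \<le> R" "\<And>i. i < n \<Longrightarrow> norm (y i) \<le> Y" "j < n"
  shows "\<bar>v j\<bar> \<le> (R + Y)\<^sup>2"
proof -
  have diff: "v a - v b \<le> (R + Y)\<^sup>2" if ab: "a < n" "b < n" for a b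
  proof -
    obtain p where p: "p \<in> L" "p \<in> power_cell n y v b" using assms(2)[OF ab(2)] by blast
    then have "v a - v b \<le> (norm (p - y a))\<^sup>2 - (norm (p - y b))\<^sup>2"
      using ab(1) unfolding power_cell_def by force
    also have "\<dots> \<le> (norm (p - y a))\<^sup>2" by simp
    also have "\<dots> \<le> (R + Y)\<^sup>2"
      using norm_triangle_ineq4[of p "y a"] assms(3)[OF p(1)] assms(4)[OF ab(1)]
      by (intro power_mono) auto
    finally show ?thesis .
  qed
  have "(\<Sum>i<n. v j - v i) = real n * v j"
    using assms(1) by (simp add: weight_space_def sum_subtractf)
  moreover have "(\<Sum>i<n. - (R + Y)\<^sup>2) \<le> (\<Sum>i<n. v j - v i)" "(\<Sum>i<n. v j - v i) \<le> (\<Sum>i<n. (R + Y)\<^sup>2)"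
    using diff assms(5) by (force intro!: sum_mono)+
  ultimately have "real n * (- (R + Y)\<^sup>2) \<le> real n * v j" "real n * v j \<le> real n * (R + Y)\<^sup>2"
    by simp_all
  moreover have "0 < real n" using assms(5) by simp
  ultimately show ?thesis
    unfolding abs_le_iff by (meson minus_le_iff mult_le_cancel_left_pos)
qed

lemma convex_body_cells_stable:
  assumes "convex_body K" "x \<in> conf_space n" "\<And>i. i < n \<Longrightarrow> convex_body (K \<inter> power_cell n x w i)"
  obtains m where "0 < m"
    "\<And>w' i. \<forall>j<n. \<bar>w' j - w j\<bar> < m \<Longrightarrow> i < n \<Longrightarrow> convex_body (K \<inter> power_cell n x w' i)"
proof -
  have "\<forall>i. \<exists>p. i < n \<longrightarrow> p \<in> interior (K \<inter> power_cell n x w i)"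
    using assms(3) unfolding convex_body_def by blast
  then obtain P where P: "\<And>i. i < n \<Longrightarrow> P i \<in> interior (K \<inter> power_cell n x w i)"
    by (metis choice)
  have neg: "power_diff x w i j (P i) < 0" if "i < n" "j < n" "i \<noteq> j" for i j
    using that assms(2) P[OF that(1)]
    by (intro power_diff_neg_if_interior[where n = n]) (auto simp: conf_space_def interior_Int)
  obtain m where m: "0 < m"
    "\<And>ij. ij \<in> {..<n} \<times> {..<n} - Id \<Longrightarrow> (case ij of (i, j) \<Rightarrow> power_diff x w i j (P i)) \<le> -m"
    by (rule finite_negative_margin[of "{..<n} \<times> {..<n} - Id" "\<lambda>(i, j). power_diff x w i j (P i)"])
      (use neg in auto)
  show thesis
  proof (rule that[of "m / 2"])
    fix w' i assume w': "\<forall>j<n. \<bar>w' j - w j\<bar> < m / 2" and "i < n"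
    have "power_diff x w' i j (P i) < 0" if "j < n" "j \<noteq> i" for j
    proof -
      have "power_diff x w' i j (P i) = power_diff x w i j (P i) - (w' i - w i) + (w' j - w j)"
        unfolding power_diff_def by simp
      moreover have "power_diff x w i j (P i) \<le> -m"
        using m(2)[of "(i, j)"] that \<open>i < n\<close> by auto
      moreover have "\<bar>w' i - w i\<bar> < m / 2" "\<bar>w' j - w j\<bar> < m / 2"
        using w' that \<open>i < n\<close> by auto
      ultimately show ?thesis by linarith
    qed
    moreover have "P i \<in> interior K" using P[OF \<open>i < n\<close>] by (simp add: interior_Int)
    ultimately have "P i \<in> interior (K \<inter> power_cell n x w' i)"
      by (intro interior_Int_power_cell)
    then show "convex_body (K \<inter> power_cell n x w' i)"
      using convex_body_Int_power_cell_iff[OF assms(1)] by blast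
  qed (use m in simp)
qed

lemma eventually_mem_power_cell_iff:
  assumes "\<And>j. j < n \<Longrightarrow> ((\<lambda>z. Y z j) \<longlongrightarrow> x j) F" "\<And>j. j < n \<Longrightarrow> ((\<lambda>z. V z j) \<longlongrightarrow> v j) F"
    and "i < n" "\<And>j. j < n \<Longrightarrow> j \<noteq> i \<Longrightarrow> power_diff x v i j p \<noteq> 0"
  shows "eventually (\<lambda>z. p \<in> power_cell n (Y z) (V z) i \<longleftrightarrow> p \<in> power_cell n x v i) F"
proof -
  have "eventually (\<lambda>z. power_diff (Y z) (V z) i j p \<le> 0 \<longleftrightarrow> power_diff x v i j p \<le> 0) F"
    if "j < n" for j
  proof (cases "j = i")
    case False
    have lim: "((\<lambda>z. power_diff (Y z) (V z) i j p) \<longlongrightarrow> power_diff x v i j p) F"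
      unfolding power_diff_def using assms(1,2) \<open>i < n\<close> \<open>j < n\<close> by (intro tendsto_intros) auto
    show ?thesis
    proof (cases "power_diff x v i j p < 0")
      case True
      then show ?thesis using order_tendstoD(2)[OF lim True] by (auto elim: eventually_mono)
    next
      case False
      then have pos: "0 < power_diff x v i j p" using assms(4) that \<open>j \<noteq> i\<close> by force
      then show ?thesis using order_tendstoD(1)[OF lim pos] by (auto elim: eventually_mono)
    qed
  qed simp
  then have "eventually (\<lambda>z. \<forall>j<n. power_diff (Y z) (V z) i j p \<le> 0 \<longleftrightarrow> power_diff x v i j p \<le> 0) F"
    by (rule eventually_all_lessThan)
  then show ?thesis
    unfolding power_cell_eq by (rule eventually_mono) auto
qed

lemma eventually_power_diff_close:
  fixes x :: "nat \<Rightarrow> 'a::euclidean_space"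
  assumes "\<And>j. j < n \<Longrightarrow> ((\<lambda>z. Y z j) \<longlongrightarrow> x j) F" "\<And>j. j < n \<Longrightarrow> ((\<lambda>z. V z j) \<longlongrightarrow> w j) F"
    and "0 < e"
  shows "eventually (\<lambda>z. \<forall>i<n. \<forall>j<n. \<forall>p. norm p \<le> R \<longrightarrow>
           \<bar>power_diff (Y z) (V z) i j p - power_diff x w i j p\<bar> < e) F"
proof (intro eventually_all_lessThan)
  fix i j assume "i < n" "j < n"
  define B where "B z = 2 * R * (norm (Y z i - x i) + norm (Y z j - x j))
     + \<bar>(norm (Y z i))\<^sup>2 - (norm (x i))\<^sup>2\<bar> + \<bar>(norm (Y z j))\<^sup>2 - (norm (x j))\<^sup>2\<bar>
     + \<bar>V z i - w i\<bar> + \<bar>V z j - w j\<bar>" for z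
  have "(B \<longlongrightarrow> 2 * R * (norm (x i - x i) + norm (x j - x j))
     + \<bar>(norm (x i))\<^sup>2 - (norm (x i))\<^sup>2\<bar> + \<bar>(norm (x j))\<^sup>2 - (norm (x j))\<^sup>2\<bar>
     + \<bar>w i - w i\<bar> + \<bar>w j - w j\<bar>) F"
    unfolding B_def using assms(1,2) \<open>i < n\<close> \<open>j < n\<close> by (intro tendsto_intros) auto
  then have "eventually (\<lambda>z. B z < e) F"
    using assms(3) by (intro order_tendstoD(2)) auto
  then show "eventually (\<lambda>z. \<forall>p. norm p \<le> R \<longrightarrow>
      \<bar>power_diff (Y z) (V z) i j p - power_diff x w i j p\<bar> < e) F"
  proof eventually_elim
    case (elim z)
    show ?case
    proof (intro allI impI)
      fix p :: 'a assume "norm p \<le> R"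
      then have "2 * norm p * (norm (Y z i - x i) + norm (Y z j - x j))
          \<le> 2 * R * (norm (Y z i - x i) + norm (Y z j - x j))"
        by (intro mult_right_mono) auto
      then show "\<bar>power_diff (Y z) (V z) i j p - power_diff x w i j p\<bar> < e"
        using power_diff_perturb[of "Y z" "V z" i j p x w] elim unfolding B_def by linarith
    qed
  qed
qed

lemma power_cell_slater_point:
  assumes "x \<in> conf_space n" "i < n" "convex_body (K \<inter> power_cell n x w i)"
  obtains c \<rho> m where "ball c \<rho> \<subseteq> K" "0 < \<rho>"
    "\<And>j. j < n \<Longrightarrow> j \<noteq> i \<Longrightarrow> power_diff x w i j c \<le> -m" "0 < m"
proof -
  obtain c where c: "c \<in> interior K" "c \<in> interior (power_cell n x w i)"
    using assms(3) unfolding convex_body_def interior_Int by blast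
  obtain \<rho> where "ball c \<rho> \<subseteq> K" "0 < \<rho>"
    using c(1) mem_interior by blast
  moreover have neg: "power_diff x w i j c < 0" if "j \<in> {j. j < n \<and> j \<noteq> i}" for j
    using that assms(1,2) by (intro power_diff_neg_if_interior[OF c(2)]) (auto simp: conf_space_def)
  obtain m where "0 < m" "\<And>j. j \<in> {j. j < n \<and> j \<noteq> i} \<Longrightarrow> power_diff x w i j c \<le> -m"
    by (rule finite_negative_margin[of "{j. j < n \<and> j \<noteq> i}" "\<lambda>j. power_diff x w i j c"])
      (use neg in auto)
  ultimately show thesis
    using that by blast
qed

context
  fixes K L :: "'a::euclidean_space set" and x y :: "nat \<Rightarrow> 'a" and c :: 'a
    and w v :: "nat \<Rightarrow> real" and n i :: nat and R \<rho> m \<Lambda> t \<delta> e :: real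
  assumes K: "convex_body K" "\<And>p. p \<in> K \<Longrightarrow> norm p \<le> R" and L: "convex_body L" and "i < n"
    and c: "ball c \<rho> \<subseteq> K" "0 < \<rho>" "\<And>j. j < n \<Longrightarrow> j \<noteq> i \<Longrightarrow> power_diff x w i j c \<le> -m" "0 < m"
    and \<Lambda>: "\<And>j. j < n \<Longrightarrow> 2 * norm (x j - x i) \<le> \<Lambda>"
    and t: "0 < t" "t \<le> 1" and \<delta>: "hausdist K L < \<delta>" "\<delta> \<le> t * \<rho>" "\<delta> \<le> 1"
    and close: "\<And>j p. j < n \<Longrightarrow> norm p \<le> R + 1 \<Longrightarrow> \<bar>power_diff y v i j p - power_diff x w i j p\<bar> < e"
      "e \<le> t * m"
begin

lemma infdist_to_perturbed_cell_le:
  assumes a: "a \<in> K \<inter> power_cell n x w i"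
  shows "infdist a (L \<inter> power_cell n y v i) \<le> 2 * R * t"
proof -
  have "c \<in> K" using c(1,2) by auto
  have "infdist a (L \<inter> power_cell n y v i) \<le> t * dist a c"
    unfolding power_cell_eq_others
  proof (rule infdist_perturbed_sublevel_le[where f = "power_diff x w i" and m = m])
    show "power_diff y v i j p < power_diff x w i j p + t * m" if "j \<in> {j. j < n \<and> j \<noteq> i}" "p \<in> K" for j p
      using close(1)[of j p] close(2) that K(2)[of p] by fastforce
    show "power_diff x w i j a \<le> 0" if "j \<in> {j. j < n \<and> j \<noteq> i}" for j
      using a that unfolding power_cell_eq by blast
    show "hausdist K L < t * \<rho>" using \<delta> by linarith
  qed (use convex_bodyD[OF K(1)] convex_bodyD[OF L] c t a convex_on_power_diff[OF convex_bodyD(2)[OF K(1)]] in auto)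
  also have "\<dots> \<le> t * (2 * R)"
    using dist_triangle3[of a c 0] K(2)[of a] K(2)[OF \<open>c \<in> K\<close>] a t(1)
    by (intro mult_left_mono) (auto simp: dist_norm)
  finally show ?thesis by (simp add: mult.commute)
qed

lemma infdist_from_perturbed_cell_le:
  assumes b: "b \<in> L \<inter> power_cell n y v i"
  shows "infdist b (K \<inter> power_cell n x w i) \<le> \<delta> + 2 * R * (e + \<Lambda> * \<delta>) / m"
proof -
  have "c \<in> K" using c(1,2) by auto
  obtain k where k: "k \<in> K" "dist b k < \<delta>"
    using exists_dist_lt_hausdist[of L K b \<delta>] convex_bodyD[OF K(1)] convex_bodyD[OF L] b \<delta>(1)
    by (auto simp: hausdist_commute)
  have "norm b \<le> R + 1"
    using K(2)[OF k(1)] k(2) \<delta>(3) norm_triangle_ineq2[of b k] by (simp add: dist_norm)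
  define \<eta> where "\<eta> = e + \<Lambda> * \<delta>"
  have "0 < e" using close(1)[OF \<open>i < n\<close>, of c] K(2)[OF \<open>c \<in> K\<close>] by simp
  moreover have \<Lambda>0: "0 \<le> \<Lambda>" using \<Lambda>[OF \<open>i < n\<close>] by simp
  moreover have "0 \<le> \<delta>" using k(2) zero_le_dist[of b k] by linarith
  ultimately have "0 \<le> \<eta>" unfolding \<eta>_def by simp
  have "power_diff x w i j k \<le> \<eta>" if "j \<in> {j. j < n \<and> j \<noteq> i}" for j
  proof -
    have "power_diff x w i j k \<le> power_diff x w i j b + 2 * norm (x j - x i) * dist k b"
      by (rule power_diff_lipschitz)
    also have "\<dots> \<le> power_diff x w i j b + \<Lambda> * \<delta>"
      using \<Lambda>[of j] k(2) that \<Lambda>0 by (intro add_left_mono mult_mono) (auto simp: dist_commute)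
    also have "power_diff x w i j b < power_diff y v i j b + e"
      using close(1)[of j b] that \<open>norm b \<le> R + 1\<close> by auto
    also have "power_diff y v i j b \<le> 0"
      using b that unfolding power_cell_eq by blast
    finally show ?thesis unfolding \<eta>_def by simp
  qed
  then have "infdist k (K \<inter> power_cell n x w i) \<le> \<eta> / (m + \<eta>) * dist k c"
    unfolding power_cell_eq_others
    using convex_bodyD(2)[OF K(1)] k(1) \<open>c \<in> K\<close> c(3,4) \<open>0 \<le> \<eta>\<close>
    by (intro infdist_convex_sublevel_le convex_on_power_diff) auto
  also have "\<dots> \<le> \<eta> / m * (2 * R)"
    using dist_triangle3[of k c 0] K(2)[OF k(1)] K(2)[OF \<open>c \<in> K\<close>] c(4) \<open>0 \<le> \<eta>\<close>
    by (intro mult_mono divide_left_mono) (auto simp: dist_norm)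
  finally show ?thesis
    using infdist_triangle[of b "K \<inter> power_cell n x w i" k] k(2) unfolding \<eta>_def by (simp add: mult.commute)
qed

lemma hausdist_power_cells_le:
  assumes "K \<inter> power_cell n x w i \<noteq> {}" "L \<inter> power_cell n y v i \<noteq> {}"
  shows "hausdist (K \<inter> power_cell n x w i) (L \<inter> power_cell n y v i)
           \<le> max (2 * R * t) (\<delta> + 2 * R * (e + \<Lambda> * \<delta>) / m)"
  using infdist_to_perturbed_cell_le infdist_from_perturbed_cell_le
  by (intro hausdist_le[OF assms]) (meson max.coboundedI1 max.coboundedI2 order_trans)+

end

lemma cell_tolerances_exist:
  fixes \<epsilon> R m \<rho> \<Lambda> :: real
  assumes "0 < \<epsilon>" "0 < R" "0 < m" "0 < \<rho>" "0 < \<Lambda>"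
  obtains t e \<delta> where "0 < t" "t \<le> 1" "0 < e" "e \<le> t * m" "0 < \<delta>" "\<delta> \<le> t * \<rho>" "\<delta> \<le> 1"
    "max (2 * R * t) (\<delta> + 2 * R * (e + \<Lambda> * \<delta>) / m) < \<epsilon>"
proof
  define t where "t = min 1 (\<epsilon> / (4 * R))"
  define e where "e = min (t * m) (\<epsilon> * m / (8 * R))"
  define \<delta> where "\<delta> = min (min 1 (t * \<rho>)) (min (\<epsilon> / 4) (\<epsilon> * m / (8 * R * \<Lambda>)))"
  show t: "0 < t" "t \<le> 1" using assms by (simp_all add: t_def)
  show "0 < e" "e \<le> t * m" using assms t by (simp_all add: e_def)
  show "0 < \<delta>" "\<delta> \<le> t * \<rho>" "\<delta> \<le> 1" using assms t by (simp_all add: \<delta>_def)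
  have "t \<le> \<epsilon> / (4 * R)"
    by (simp add: t_def)
  then have "t * (4 * R) \<le> \<epsilon>"
    using assms by (simp add: le_divide_eq)
  then have "2 * R * t \<le> \<epsilon> / 2"
    by (simp add: algebra_simps)
  moreover have "e \<le> \<epsilon> * m / (8 * R)"
    by (simp add: e_def)
  then have "e * (8 * R) \<le> \<epsilon> * m"
    using assms by (simp add: le_divide_eq)
  then have "2 * R * e / m \<le> \<epsilon> / 4"
    using assms by (simp add: divide_le_eq algebra_simps)
  moreover have "\<delta> \<le> \<epsilon> * m / (8 * R * \<Lambda>)"
    by (simp add: \<delta>_def)
  then have "\<delta> * (8 * R * \<Lambda>) \<le> \<epsilon> * m"
    using assms by (simp add: le_divide_eq)
  then have "2 * R * (\<Lambda> * \<delta>) / m \<le> \<epsilon> / 4"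
    using assms by (simp add: divide_le_eq algebra_simps)
  moreover have "\<delta> \<le> \<epsilon> / 4"
    by (simp add: \<delta>_def)
  ultimately show "max (2 * R * t) (\<delta> + 2 * R * (e + \<Lambda> * \<delta>) / m) < \<epsilon>"
    using assms(1) by (simp add: distrib_left add_divide_distrib)
qed

section \<open>Neighbourhoods of a configuration and a body\<close>

definition config_ball :: "nat \<Rightarrow> (nat \<Rightarrow> 'a::euclidean_space) \<Rightarrow> 'a set \<Rightarrow> real \<Rightarrow> ((nat \<Rightarrow> 'a) \<times> 'a set) set" where
  "config_ball n x K \<delta> = {(y, L). y \<in> conf_space n \<and> convex_body L
      \<and> (\<forall>i<n. dist (x i) (y i) < \<delta>) \<and> hausdist K L < \<delta>}"

(* The neighbourhood filter of (x, K) for the sup of the Euclidean and Hausdorff distances: continuity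
   in the sense of the theorem is convergence along this filter. *)
definition config_nhds :: "nat \<Rightarrow> (nat \<Rightarrow> 'a::euclidean_space) \<Rightarrow> 'a set \<Rightarrow> ((nat \<Rightarrow> 'a) \<times> 'a set) filter" where
  "config_nhds n x K = (INF \<delta>\<in>{0<..}. principal (config_ball n x K \<delta>))"

lemma config_ball_mono: "\<delta> \<le> \<delta>' \<Longrightarrow> config_ball n x K \<delta> \<subseteq> config_ball n x K \<delta>'"
  unfolding config_ball_def by fastforce

lemma eventually_config_nhds:
  "eventually P (config_nhds n x K) \<longleftrightarrow> (\<exists>\<delta>>0. \<forall>z\<in>config_ball n x K \<delta>. P z)"
  unfolding config_nhds_def
proof (subst eventually_INF_base)
  show "{0::real<..} \<noteq> {}" by (auto intro: exI[of _ 1])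
  show "\<exists>\<gamma>\<in>{0<..}. principal (config_ball n x K \<gamma>)
          \<le> inf (principal (config_ball n x K \<alpha>)) (principal (config_ball n x K \<beta>))"
    if "\<alpha> \<in> {0<..}" "\<beta> \<in> {0<..}" for \<alpha> \<beta>
  proof -
    have "config_ball n x K (min \<alpha> \<beta>) \<subseteq> config_ball n x K \<alpha> \<inter> config_ball n x K \<beta>"
      by (simp add: config_ball_mono)
    then show ?thesis
      using that by (intro bexI[of _ "min \<alpha> \<beta>"]) auto
  qed
qed (auto simp: eventually_principal)

lemma eventually_config_nhds_admissible:
  "eventually (\<lambda>(y, L). y \<in> conf_space n \<and> convex_body L) (config_nhds n x K)"
  unfolding eventually_config_nhds config_ball_def by (auto intro: exI[of _ 1])

lemma eventually_config_nhds_hausdist: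
  "0 < \<delta> \<Longrightarrow> eventually (\<lambda>(y, L). hausdist K L < \<delta>) (config_nhds n x K)"
  unfolding eventually_config_nhds config_ball_def by auto

lemma tendsto_config_nhds_point:
  assumes "j < n"
  shows "((\<lambda>z. fst z j) \<longlongrightarrow> x j) (config_nhds n x K)"
proof (rule tendstoI)
  fix e :: real assume "0 < e"
  then show "eventually (\<lambda>z. dist (fst z j) (x j) < e) (config_nhds n x K)"
    using assms unfolding eventually_config_nhds config_ball_def by (auto simp: dist_commute)
qed

lemma config_nhds_counterexample_seq:
  assumes "convex_body K" "\<not> eventually P (config_nhds n x K)"
  obtains Y L where "\<And>k. Y k \<in> conf_space n" "\<And>k. convex_body (L k)" "\<And>k. \<not> P (Y k, L k)"
    "\<And>k j. j < n \<Longrightarrow> dist (x j) (Y k j) < inverse (Suc k)"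
    "\<And>k. hausdist K (L k) < inverse (Suc k)"
    "\<And>j. j < n \<Longrightarrow> (\<lambda>k. Y k j) \<longlonglongrightarrow> x j" "(\<lambda>k. hausdist K (L k)) \<longlonglongrightarrow> 0"
proof -
  have "\<exists>y L. y \<in> conf_space n \<and> convex_body L \<and> \<not> P (y, L)
          \<and> (\<forall>j<n. dist (x j) (y j) < inverse (Suc k)) \<and> hausdist K L < inverse (Suc k)" for k
  proof -
    have "0 < inverse (real (Suc k))" by simp
    then obtain z where "z \<in> config_ball n x K (inverse (Suc k))" "\<not> P z"
      using assms(2) unfolding eventually_config_nhds by blast
    then show ?thesis
      unfolding config_ball_def by (cases z) auto
  qed
  then obtain Y L where YL: "\<And>k. Y k \<in> conf_space n" "\<And>k. convex_body (L k)" "\<And>k. \<not> P (Y k, L k)"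
    "\<And>k j. j < n \<Longrightarrow> dist (x j) (Y k j) < inverse (Suc k)"
    "\<And>k. hausdist K (L k) < inverse (Suc k)"
    by metis
  moreover have "(\<lambda>k. Y k j) \<longlonglongrightarrow> x j" if "j < n" for j
  proof -
    have "(\<lambda>k. Y k j - x j) \<longlonglongrightarrow> 0"
      using YL(4)[OF that] by (intro LIMSEQ_norm_0) (simp add: dist_norm norm_minus_commute divide_inverse)
    then show ?thesis by (simp add: LIM_zero_iff)
  qed
  moreover have "(\<lambda>k. hausdist K (L k)) \<longlonglongrightarrow> 0"
  proof (rule LIMSEQ_norm_0)
    fix k
    have "0 \<le> hausdist K (L k)"
      using YL(2)[of k] assms(1) by (intro hausdist_nonneg) (auto simp: convex_body_def compact_imp_bounded)
    then show "norm (hausdist K (L k)) < 1 / real (Suc k)"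
      using YL(5)[of k] by (simp add: divide_inverse)
  qed
  ultimately show thesis
    using that by blast
qed

section \<open>Equipartitions\<close>

locale equipartition = prob_space \<mu> for \<mu> :: "'a::euclidean_space measure" +
  fixes n :: nat
  assumes sets_eq_borel: "sets \<mu> = sets borel"
    and absolutely_continuous: "absolutely_continuous lborel \<mu>"
    and n_pos: "n \<ge> 1"
    and unique_equipart_weights:
      "\<And>K x. convex_body K \<Longrightarrow> x \<in> conf_space n \<Longrightarrow> \<exists>!w. equipart_weights \<mu> n K x w"
begin

lemma equipart_eq_weights:
  assumes "convex_body K" "x \<in> conf_space n"
  shows "equipart_weights \<mu> n K x (eq_weights \<mu> n K x)"
  unfolding eq_weights_def by (rule theI'[OF unique_equipart_weights[OF assms]])

lemma eq_weights_eqI: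
  assumes "convex_body K" "x \<in> conf_space n" "equipart_weights \<mu> n K x w"
  shows "eq_weights \<mu> n K x = w"
  unfolding eq_weights_def using assms by (intro the1_equality unique_equipart_weights)

lemma convex_body_eq_cells:
  "convex_body K \<Longrightarrow> x \<in> conf_space n \<Longrightarrow> i < n \<Longrightarrow> convex_body (eq_cells \<mu> n x K i)"
  using equipart_eq_weights unfolding equipart_weights_def eq_cells_def by blast

lemma space_eq_UNIV: "space \<mu> = UNIV"
  using sets_eq_imp_space_eq[OF sets_eq_borel] by simp

lemma closed_in_sets: "closed A \<Longrightarrow> A \<in> sets \<mu>"
  using sets_eq_borel by (simp add: borel_closed)

lemma negligible_in_null_sets:
  assumes "negligible N" "closed N"
  shows "N \<in> null_sets \<mu>"
proof -
  have "N \<in> null_sets lebesgue" using assms(1) by (simp add: negligible_iff_null_sets)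
  then have "N \<in> null_sets lborel"
    using assms(2) by (simp add: null_sets_completion_iff borel_closed)
  then show ?thesis
    using absolutely_continuous unfolding absolutely_continuous_def by auto
qed

lemma interior_nonempty_if_measure_pos:
  assumes "convex A" "closed A" "0 < measure \<mu> A"
  shows "interior A \<noteq> {}"
proof
  assume "interior A = {}"
  then have "A \<in> null_sets \<mu>"
    using assms(1,2) by (intro negligible_in_null_sets) (simp_all add: negligible_convex_interior)
  then show False
    using assms(3) by (simp add: measure_def null_setsD1)
qed

text \<open>Absolute continuity does not make \<open>\<mu>\<close> positive on convex bodies; positivity comes from the
  uniqueness of the weights: if \<open>\<mu> K = 0\<close>, small perturbations of \<open>w\<^sub>K(x)\<close> would still equipartition \<open>K\<close>.\<close>
lemma measure_convex_body_pos:
  assumes "2 \<le> n" "convex_body K"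
  shows "0 < measure \<mu> K"
proof (rule ccontr)
  assume "\<not> 0 < measure \<mu> K"
  then have null: "measure \<mu> (K \<inter> C) = 0" if "closed C" for C
    using finite_measure_mono[of "K \<inter> C" K] assms(2) that
    by (auto simp: convex_body_def compact_imp_closed closed_in_sets intro: antisym)
  obtain b :: 'a where "b \<in> Basis" using nonempty_Basis by blast
  then have "b \<noteq> 0" by (auto simp: nonzero_Basis)
  define x where "x = (\<lambda>i::nat. real i *\<^sub>R b)"
  have x: "x \<in> conf_space n" using \<open>b \<noteq> 0\<close> unfolding conf_space_def x_def by auto
  define w where "w = eq_weights \<mu> n K x"
  have E: "equipart_weights \<mu> n K x w"
    unfolding w_def by (rule equipart_eq_weights[OF assms(2) x])
  then obtain m where m: "0 < m"
    "\<And>w' i. \<forall>j<n. \<bar>w' j - w j\<bar> < m \<Longrightarrow> i < n \<Longrightarrow> convex_body (K \<inter> power_cell n x w' i)"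
    using convex_body_cells_stable[OF assms(2) x] unfolding equipart_weights_def by blast
  define w' where "w' i = w i + (if i = 0 then m / 2 else 0) - (if i = 1 then m / 2 else 0)" for i
  have "equipart_weights \<mu> n K x w'"
    unfolding equipart_weights_def
  proof (intro conjI allI impI)
    have "(\<Sum>i<n. w' i) = (\<Sum>i<n. w i)"
      using assms(1) by (simp add: w'_def sum.distrib sum_subtractf)
    then show "w' \<in> weight_space n"
      using E assms(1) by (auto simp: equipart_weights_def weight_space_def w'_def)
    show "convex_body (K \<inter> power_cell n x w' i)" if "i < n" for i
      using m(1) that by (intro m(2)) (auto simp: w'_def)
    show "measure \<mu> (K \<inter> power_cell n x w' i) = measure \<mu> (K \<inter> power_cell n x w' j)" for i j
      by (simp add: null closed_power_cell)
  qed
  then have "w' = w"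
    using eq_weights_eqI[OF assms(2) x] unfolding w_def by simp
  then have "w' 0 = w 0" by simp
  then show False
    using m(1) by (simp add: w'_def)
qed

lemma convex_body_cell_if_equal_measures:
  assumes "convex_body K" "i < n"
    and eq: "\<And>j. j < n \<Longrightarrow> measure \<mu> (K \<inter> power_cell n x v j) = measure \<mu> (K \<inter> power_cell n x v i)"
  shows "convex_body (K \<inter> power_cell n x v i)"
proof (cases "n = 1")
  case True
  then show ?thesis using assms(1,2) by (simp add: power_cell_def)
next
  case False
  then have "2 \<le> n" using n_pos by simp
  have sets: "K \<inter> power_cell n x v j \<in> sets \<mu>" for j
    using assms(1) by (intro closed_in_sets closed_Int closed_power_cell) (simp add: convex_body_def compact_imp_closed)
  have "0 < measure \<mu> K"
    by (rule measure_convex_body_pos[OF \<open>2 \<le> n\<close> assms(1)])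
  also have "measure \<mu> K = measure \<mu> (\<Union>j<n. K \<inter> power_cell n x v j)"
    using UN_power_cell[OF n_pos, of x v] by simp
  also have "\<dots> \<le> (\<Sum>j<n. measure \<mu> (K \<inter> power_cell n x v j))"
    using sets by (intro finite_measure_subadditive_finite) auto
  also have "\<dots> = real n * measure \<mu> (K \<inter> power_cell n x v i)"
    using eq by simp
  finally have "0 < measure \<mu> (K \<inter> power_cell n x v i)"
    by (simp add: zero_less_mult_iff)
  then have "interior (K \<inter> power_cell n x v i) \<noteq> {}"
    using assms(1) by (intro interior_nonempty_if_measure_pos)
      (simp_all add: convex_body_def convex_Int convex_power_cell closed_Int compact_imp_closed closed_power_cell)
  then show ?thesis
    using convex_body_Int_power_cell_iff[OF assms(1)] by blast
qed

lemma power_diff_zero_null: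
  assumes "x j \<noteq> x i"
  shows "{p. power_diff x v i j p = 0} \<in> null_sets \<mu>"
proof (rule negligible_in_null_sets)
  have "{p. power_diff x v i j p = 0} =
      {p. (2 *\<^sub>R (x j - x i)) \<bullet> p = (norm (x j))\<^sup>2 - (norm (x i))\<^sup>2 + v i - v j}"
    unfolding power_diff_eq by (auto simp: inner_commute algebra_simps)
  moreover have "negligible {p. (2 *\<^sub>R (x j - x i)) \<bullet> p = (norm (x j))\<^sup>2 - (norm (x i))\<^sup>2 + v i - v j}"
    using assms by (intro negligible_hyperplane) simp
  ultimately show "negligible {p. power_diff x v i j p = 0}"
    by (simp only:)
  show "closed {p. power_diff x v i j p = 0}"
    by (intro closed_Collect_eq continuous_intros)
qed

lemma AE_eventually_mem_cell_iff:
  assumes x: "x \<in> conf_space n" and K: "convex_body K" and "i < n"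
    and Y: "\<And>j. j < n \<Longrightarrow> (\<lambda>k. Y k j) \<longlonglongrightarrow> x j" and V: "\<And>j. j < n \<Longrightarrow> (\<lambda>k. V k j) \<longlonglongrightarrow> v j"
    and L: "\<And>k. convex_body (L k)" and H: "(\<lambda>k. hausdist K (L k)) \<longlonglongrightarrow> 0"
  shows "AE p in \<mu>. eventually (\<lambda>k. p \<in> L k \<inter> power_cell n (Y k) (V k) i \<longleftrightarrow> p \<in> K \<inter> power_cell n x v i)
    sequentially"
proof -
  have "frontier K \<in> null_sets \<mu>"
    using K by (intro negligible_in_null_sets) (auto simp: convex_body_def negligible_convex_frontier)
  then have "AE p in \<mu>. p \<notin> frontier K"
    by (rule AE_not_in)
  moreover have "AE p in \<mu>. \<forall>j\<in>{j. j < n \<and> j \<noteq> i}. power_diff x v i j p \<noteq> 0"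
  proof (rule AE_finite_allI)
    fix j assume "j \<in> {j. j < n \<and> j \<noteq> i}"
    then have "x j \<noteq> x i" using x \<open>i < n\<close> unfolding conf_space_def by auto
    then show "AE p in \<mu>. power_diff x v i j p \<noteq> 0"
      using AE_not_in[OF power_diff_zero_null] by simp
  qed simp
  ultimately show ?thesis
  proof eventually_elim
    case (elim p)
    have "eventually (\<lambda>k. p \<in> L k \<longleftrightarrow> p \<in> K) sequentially"
      using convex_bodyD[OF K] convex_bodyD[OF L] elim(1) H by (intro eventually_mem_iff_hausdist) auto
    moreover have "eventually (\<lambda>k. p \<in> power_cell n (Y k) (V k) i \<longleftrightarrow> p \<in> power_cell n x v i) sequentially"
      using Y V \<open>i < n\<close> elim(2) by (intro eventually_mem_power_cell_iff) auto
    ultimately show ?case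
      by eventually_elim blast
  qed
qed

lemma tendsto_measure_cell:
  assumes x: "x \<in> conf_space n" and K: "convex_body K" and "i < n"
    and Y: "\<And>j. j < n \<Longrightarrow> (\<lambda>k. Y k j) \<longlonglongrightarrow> x j" and V: "\<And>j. j < n \<Longrightarrow> (\<lambda>k. V k j) \<longlonglongrightarrow> v j"
    and L: "\<And>k. convex_body (L k)" and H: "(\<lambda>k. hausdist K (L k)) \<longlonglongrightarrow> 0"
  shows "(\<lambda>k. measure \<mu> (L k \<inter> power_cell n (Y k) (V k) i)) \<longlonglongrightarrow> measure \<mu> (K \<inter> power_cell n x v i)"
proof -
  have closed_cells: "closed (K \<inter> power_cell n x v i)" "closed (L k \<inter> power_cell n (Y k) (V k) i)" for k
    using convex_bodyD(5)[OF K] convex_bodyD(5)[OF L] by (simp_all add: closed_Int closed_power_cell)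
  have "AE p in \<mu>. eventually (\<lambda>k. p \<in> L k \<inter> power_cell n (Y k) (V k) i \<longleftrightarrow> p \<in> K \<inter> power_cell n x v i)
      sequentially"
    using x K \<open>i < n\<close> Y V L H by (rule AE_eventually_mem_cell_iff)
  then have "AE p in \<mu>. (\<lambda>k. indicator (L k \<inter> power_cell n (Y k) (V k) i) p :: real)
      \<longlonglongrightarrow> indicator (K \<inter> power_cell n x v i) p"
  proof eventually_elim
    case (elim p)
    then have "eventually (\<lambda>k. (indicator (L k \<inter> power_cell n (Y k) (V k) i) p :: real)
        = indicator (K \<inter> power_cell n x v i) p) sequentially"
      by eventually_elim (simp add: indicator_def)
    then show ?case by (rule tendsto_eventually)
  qed
  then have "(\<lambda>k. integral\<^sup>L \<mu> (indicator (L k \<inter> power_cell n (Y k) (V k) i)))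
      \<longlonglongrightarrow> integral\<^sup>L \<mu> (indicator (K \<inter> power_cell n x v i) :: 'a \<Rightarrow> real)"
    by (intro integral_dominated_convergence[where w = "\<lambda>_. 1"])
      (auto intro: borel_measurable_indicator closed_in_sets closed_cells simp: indicator_def)
  then show ?thesis by (simp add: space_eq_UNIV)
qed

lemma equipart_weights_limit:
  assumes x: "x \<in> conf_space n" and K: "convex_body K"
    and Y: "\<And>j. j < n \<Longrightarrow> (\<lambda>k. Y k j) \<longlonglongrightarrow> x j"
    and V: "\<And>j. j < n \<Longrightarrow> (\<lambda>k. V k j) \<longlonglongrightarrow> v j" "\<And>j. n \<le> j \<Longrightarrow> v j = 0"
    and L: "\<And>k. convex_body (L k)" and H: "(\<lambda>k. hausdist K (L k)) \<longlonglongrightarrow> 0"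
    and E: "\<And>k. equipart_weights \<mu> n (L k) (Y k) (V k)"
  shows "equipart_weights \<mu> n K x v"
proof -
  have lim: "(\<lambda>k. measure \<mu> (L k \<inter> power_cell n (Y k) (V k) i)) \<longlonglongrightarrow> measure \<mu> (K \<inter> power_cell n x v i)"
    if "i < n" for i
    using x K that Y V(1) L H by (rule tendsto_measure_cell)
  have meq: "measure \<mu> (K \<inter> power_cell n x v j) = measure \<mu> (K \<inter> power_cell n x v i)"
    if "i < n" "j < n" for i j
  proof -
    have "measure \<mu> (L k \<inter> power_cell n (Y k) (V k) i) = measure \<mu> (L k \<inter> power_cell n (Y k) (V k) j)" for k
      using E[of k] that unfolding equipart_weights_def by blast
    then have "(\<lambda>k. measure \<mu> (L k \<inter> power_cell n (Y k) (V k) j)) \<longlonglongrightarrow> measure \<mu> (K \<inter> power_cell n x v i)"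
      using lim[OF that(1)] by simp
    then show ?thesis
      using LIMSEQ_unique lim[OF that(2)] by blast
  qed
  have "(\<Sum>j<n. V k j) = 0" for k
    using E[of k] unfolding equipart_weights_def weight_space_def by blast
  then have "(\<lambda>k. 0) \<longlonglongrightarrow> (\<Sum>j<n. v j)"
    using V(1) tendsto_sum[of "{..<n}" "\<lambda>j k. V k j" v sequentially] by simp
  then have "0 = (\<Sum>j<n. v j)"
    by (rule LIMSEQ_unique[OF tendsto_const])
  then have "v \<in> weight_space n"
    using V(2) by (simp add: weight_space_def)
  moreover have "convex_body (K \<inter> power_cell n x v i)" if "i < n" for i
    using K that meq[OF that] by (rule convex_body_cell_if_equal_measures)
  ultimately show ?thesis
    unfolding equipart_weights_def using meq by metis
qed

lemma eq_weights_locally_bounded: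
  assumes "convex_body K"
  obtains M where "\<And>y L j. y \<in> conf_space n \<Longrightarrow> convex_body L \<Longrightarrow> \<forall>i<n. dist (x i) (y i) < 1 \<Longrightarrow>
    hausdist K L < 1 \<Longrightarrow> j < n \<Longrightarrow> \<bar>eq_weights \<mu> n L y j\<bar> \<le> M"
proof -
  obtain R where R: "\<And>p. p \<in> K \<Longrightarrow> norm p \<le> R"
    using convex_bodyD(4)[OF assms] unfolding bounded_iff by blast
  define X where "X = (\<Sum>i<n. norm (x i))"
  show thesis
  proof (rule that)
    fix y L j assume y: "y \<in> conf_space n" and L: "convex_body L"
      and close: "\<forall>i<n. dist (x i) (y i) < 1" "hausdist K L < 1" and "j < n"
    have E: "equipart_weights \<mu> n L y (eq_weights \<mu> n L y)"
      by (rule equipart_eq_weights[OF L y])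
    show "\<bar>eq_weights \<mu> n L y j\<bar> \<le> (R + 1 + (X + 1))\<^sup>2"
    proof (rule abs_weight_le[OF _ _ _ _ \<open>j < n\<close>])
      show "eq_weights \<mu> n L y \<in> weight_space n"
        using E unfolding equipart_weights_def by blast
      show "L \<inter> power_cell n y (eq_weights \<mu> n L y) i \<noteq> {}" if "i < n" for i
        using E that convex_bodyD(3) unfolding equipart_weights_def by blast
      show "norm p \<le> R + 1" if pL: "p \<in> L" for p
      proof -
        obtain q where "q \<in> K" "dist p q < 1"
          by (rule exists_dist_lt_hausdist[of L K p 1])
            (use convex_bodyD[OF L] convex_bodyD[OF assms] close(2) pL in \<open>auto simp: hausdist_commute\<close>)
        then show ?thesis
          using R norm_triangle_ineq2[of p q] by (fastforce simp: dist_norm)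
      qed
      show "norm (y i) \<le> X + 1" if "i < n" for i
      proof -
        have "norm (x i) \<le> X" unfolding X_def using that by (intro member_le_sum) auto
        then show ?thesis
          using close(1) that norm_triangle_ineq2[of "y i" "x i"] by (fastforce simp: dist_norm norm_minus_commute)
      qed
    qed
  qed
qed

lemma eq_weights_subseq_tendsto:
  assumes x: "x \<in> conf_space n" and K: "convex_body K"
    and Y: "\<And>k. Y k \<in> conf_space n" "\<And>j. j < n \<Longrightarrow> (\<lambda>k. Y k j) \<longlonglongrightarrow> x j"
    and L: "\<And>k. convex_body (L k)" "(\<lambda>k. hausdist K (L k)) \<longlonglongrightarrow> 0"
    and bound: "\<And>k j. j < n \<Longrightarrow> \<bar>eq_weights \<mu> n (L k) (Y k) j\<bar> \<le> M"
  obtains r where "strict_mono r"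
    "\<And>j. j < n \<Longrightarrow> (\<lambda>k. eq_weights \<mu> n (L (r k)) (Y (r k)) j) \<longlonglongrightarrow> eq_weights \<mu> n K x j"
proof -
  define V where "V k = eq_weights \<mu> n (L k) (Y k)" for k
  have "\<bar>V k j\<bar> \<le> M" if "j < n" for k j
    unfolding V_def using bound that .
  then obtain r l where r: "strict_mono r" and l: "\<And>j. j < n \<Longrightarrow> (\<lambda>k. V (r k) j) \<longlonglongrightarrow> l j"
    using bounded_seq_convergent_subseq[of n V M thesis] by blast
  define v where "v j = (if j < n then l j else 0)" for j
  have "equipart_weights \<mu> n K x v"
  proof (rule equipart_weights_limit[OF x K])
    show "(\<lambda>k. Y (r k) j) \<longlonglongrightarrow> x j" if "j < n" for j
      using LIMSEQ_subseq_LIMSEQ[OF Y(2)[OF that] r] by (simp add: comp_def)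
    show "(\<lambda>k. hausdist K (L (r k))) \<longlonglongrightarrow> 0"
      using LIMSEQ_subseq_LIMSEQ[OF L(2) r] by (simp add: comp_def)
    show "(\<lambda>k. V (r k) j) \<longlonglongrightarrow> v j" if "j < n" for j
      using l[OF that] that by (simp add: v_def)
    show "equipart_weights \<mu> n (L (r k)) (Y (r k)) (V (r k))" for k
      unfolding V_def by (rule equipart_eq_weights[OF L(1) Y(1)])
  qed (use L(1) v_def in auto)
  then have "eq_weights \<mu> n K x = v"
    by (rule eq_weights_eqI[OF K x])
  then have "eq_weights \<mu> n K x j = l j" if "j < n" for j
    using that by (simp add: v_def)
  then show thesis
    using l by (intro that[OF r]) (simp add: V_def)
qed

lemma tendsto_eq_weights:
  assumes x: "x \<in> conf_space n" and K: "convex_body K" and "j < n"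
  shows "((\<lambda>z. eq_weights \<mu> n (snd z) (fst z) j) \<longlongrightarrow> eq_weights \<mu> n K x j) (config_nhds n x K)"
proof (rule tendstoI, rule ccontr)
  fix e :: real
  assume "0 < e" and not_eventually:
    "\<not> eventually (\<lambda>z. dist (eq_weights \<mu> n (snd z) (fst z) j) (eq_weights \<mu> n K x j) < e) (config_nhds n x K)"
  obtain Y L where YL: "\<And>k. Y k \<in> conf_space n" "\<And>k. convex_body (L k)"
    "\<And>k. \<not> dist (eq_weights \<mu> n (L k) (Y k) j) (eq_weights \<mu> n K x j) < e"
    "\<And>k i. i < n \<Longrightarrow> dist (x i) (Y k i) < inverse (Suc k)" "\<And>k. hausdist K (L k) < inverse (Suc k)"
    "\<And>i. i < n \<Longrightarrow> (\<lambda>k. Y k i) \<longlonglongrightarrow> x i" "(\<lambda>k. hausdist K (L k)) \<longlonglongrightarrow> 0"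
    by (rule config_nhds_counterexample_seq[OF K not_eventually]) auto
  obtain M where M: "\<And>y L i. y \<in> conf_space n \<Longrightarrow> convex_body L \<Longrightarrow> \<forall>i<n. dist (x i) (y i) < 1 \<Longrightarrow>
      hausdist K L < 1 \<Longrightarrow> i < n \<Longrightarrow> \<bar>eq_weights \<mu> n L y i\<bar> \<le> M"
    using eq_weights_locally_bounded[where x = x, OF K] by blast
  have inv_le: "inverse (real (Suc k)) \<le> 1" for k
    by (simp add: inverse_le_1_iff)
  have bound: "\<bar>eq_weights \<mu> n (L k) (Y k) i\<bar> \<le> M" if "i < n" for k i
  proof (rule M[OF YL(1,2) _ _ that])
    show "\<forall>i<n. dist (x i) (Y k i) < 1" using YL(4) inv_le[of k] by (auto intro: order.strict_trans2)
    show "hausdist K (L k) < 1" using YL(5) inv_le[of k] by (auto intro: order.strict_trans2)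
  qed
  obtain r where "(\<lambda>k. eq_weights \<mu> n (L (r k)) (Y (r k)) j) \<longlonglongrightarrow> eq_weights \<mu> n K x j"
    using eq_weights_subseq_tendsto[OF x K YL(1,6,2,7) bound, of thesis] \<open>j < n\<close> by blast
  then have "eventually (\<lambda>k. dist (eq_weights \<mu> n (L (r k)) (Y (r k)) j) (eq_weights \<mu> n K x j) < e) sequentially"
    using \<open>0 < e\<close> by (rule tendstoD)
  then obtain k where "dist (eq_weights \<mu> n (L (r k)) (Y (r k)) j) (eq_weights \<mu> n K x j) < e"
    unfolding eventually_sequentially by blast
  with YL(3) show False by blast
qed

lemma eventually_power_diff_eq_weights_close:
  assumes "x \<in> conf_space n" "convex_body K" "0 < e"
  shows "eventually (\<lambda>z. \<forall>i<n. \<forall>j<n. \<forall>p. norm p \<le> R \<longrightarrow>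
    \<bar>power_diff (fst z) (eq_weights \<mu> n (snd z) (fst z)) i j p - power_diff x (eq_weights \<mu> n K x) i j p\<bar> < e)
    (config_nhds n x K)"
  using assms by (intro eventually_power_diff_close tendsto_config_nhds_point tendsto_eq_weights)

lemma eventually_hausdist_eq_cells_le:
  assumes x: "x \<in> conf_space n" and K: "convex_body K" and "i < n"
    and R: "\<And>p. p \<in> K \<Longrightarrow> norm p \<le> R"
    and c: "ball c \<rho> \<subseteq> K" "0 < \<rho>"
      "\<And>j. j < n \<Longrightarrow> j \<noteq> i \<Longrightarrow> power_diff x (eq_weights \<mu> n K x) i j c \<le> -m" "0 < m"
    and \<Lambda>: "\<And>j. j < n \<Longrightarrow> 2 * norm (x j - x i) \<le> \<Lambda>"
    and t: "0 < t" "t \<le> 1" "0 < e" "e \<le> t * m" "0 < \<delta>" "\<delta> \<le> t * \<rho>" "\<delta> \<le> 1"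
  shows "eventually (\<lambda>(y, L). hausdist (eq_cells \<mu> n x K i) (eq_cells \<mu> n y L i)
           \<le> max (2 * R * t) (\<delta> + 2 * R * (e + \<Lambda> * \<delta>) / m)) (config_nhds n x K)"
proof -
  have "eventually (\<lambda>z. \<forall>i<n. \<forall>j<n. \<forall>p. norm p \<le> R + 1 \<longrightarrow> \<bar>power_diff (fst z) (eq_weights \<mu> n (snd z) (fst z)) i j p
      - power_diff x (eq_weights \<mu> n K x) i j p\<bar> < e) (config_nhds n x K)"
    using x K \<open>0 < e\<close> by (rule eventually_power_diff_eq_weights_close)
  moreover have "eventually (\<lambda>(y, L). y \<in> conf_space n \<and> convex_body L) (config_nhds n x K)"
    by (rule eventually_config_nhds_admissible)
  moreover have "eventually (\<lambda>(y, L). hausdist K L < \<delta>) (config_nhds n x K)"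
    using \<open>0 < \<delta>\<close> by (rule eventually_config_nhds_hausdist)
  ultimately show ?thesis
  proof eventually_elim
    case (elim z)
    obtain y L where z: "z = (y, L)" by fastforce
    have y: "y \<in> conf_space n" and L: "convex_body L" using elim(2) z by auto
    have "hausdist (K \<inter> power_cell n x (eq_weights \<mu> n K x) i) (L \<inter> power_cell n y (eq_weights \<mu> n L y) i)
        \<le> max (2 * R * t) (\<delta> + 2 * R * (e + \<Lambda> * \<delta>) / m)"
    proof (rule hausdist_power_cells_le[OF K R L \<open>i < n\<close> c \<Lambda> t(1,2) _ t(6,7) _ t(4)])
      show "K \<inter> power_cell n x (eq_weights \<mu> n K x) i \<noteq> {}"
        using convex_bodyD(3)[OF convex_body_eq_cells[OF K x \<open>i < n\<close>]] by (simp add: eq_cells_def)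
      show "L \<inter> power_cell n y (eq_weights \<mu> n L y) i \<noteq> {}"
        using convex_bodyD(3)[OF convex_body_eq_cells[OF L y \<open>i < n\<close>]] by (simp add: eq_cells_def)
      show "hausdist K L < \<delta>" using elim(3) z by simp
      show "\<bar>power_diff y (eq_weights \<mu> n L y) i j p - power_diff x (eq_weights \<mu> n K x) i j p\<bar> < e"
        if "j < n" "norm p \<le> R + 1" for j p
        using elim(1) z that \<open>i < n\<close> by simp
    qed
    then show ?case
      using z by (simp add: eq_cells_def)
  qed
qed

lemma eventually_hausdist_eq_cells_less:
  assumes x: "x \<in> conf_space n" and K: "convex_body K" and "i < n" "0 < \<epsilon>"
  shows "eventually (\<lambda>(y, L). hausdist (eq_cells \<mu> n x K i) (eq_cells \<mu> n y L i) < \<epsilon>) (config_nhds n x K)"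
proof -
  have A: "convex_body (K \<inter> power_cell n x (eq_weights \<mu> n K x) i)"
    using convex_body_eq_cells[OF K x \<open>i < n\<close>] unfolding eq_cells_def .
  obtain c \<rho> m where c: "ball c \<rho> \<subseteq> K" "0 < \<rho>"
    "\<And>j. j < n \<Longrightarrow> j \<noteq> i \<Longrightarrow> power_diff x (eq_weights \<mu> n K x) i j c \<le> -m" "0 < m"
    by (rule power_cell_slater_point[OF x \<open>i < n\<close> A]) blast
  obtain R where R: "0 < R" "\<And>p. p \<in> K \<Longrightarrow> norm p \<le> R"
    using convex_bodyD(4)[OF K] unfolding bounded_pos by blast
  obtain \<Lambda> where \<Lambda>: "0 < \<Lambda>" "\<And>j. j < n \<Longrightarrow> 2 * norm (x j - x i) \<le> \<Lambda>"
    by (rule finite_pos_upper_bound[of "{..<n}" "\<lambda>j. 2 * norm (x j - x i)"]) auto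
  obtain t e \<delta> where t: "0 < t" "t \<le> 1" "0 < e" "e \<le> t * m" "0 < \<delta>" "\<delta> \<le> t * \<rho>" "\<delta> \<le> 1"
    and small: "max (2 * R * t) (\<delta> + 2 * R * (e + \<Lambda> * \<delta>) / m) < \<epsilon>"
    using cell_tolerances_exist[OF \<open>0 < \<epsilon>\<close> R(1) c(4,2) \<Lambda>(1)] by blast
  have "eventually (\<lambda>(y, L). hausdist (eq_cells \<mu> n x K i) (eq_cells \<mu> n y L i)
      \<le> max (2 * R * t) (\<delta> + 2 * R * (e + \<Lambda> * \<delta>) / m)) (config_nhds n x K)"
    using x K \<open>i < n\<close> R(2) c \<Lambda>(2) t by (rule eventually_hausdist_eq_cells_le)
  then show ?thesis
    by (rule eventually_mono) (use small in \<open>auto split: prod.splits\<close>)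
qed

lemma eq_cells_continuous:
  assumes "x \<in> conf_space n" "convex_body K" "0 < \<epsilon>"
  shows "\<exists>\<delta>>0. \<forall>y L. y \<in> conf_space n \<and> convex_body L \<and> (\<forall>i<n. dist (x i) (y i) < \<delta>)
           \<and> hausdist K L < \<delta> \<longrightarrow> (\<forall>i<n. hausdist (eq_cells \<mu> n x K i) (eq_cells \<mu> n y L i) < \<epsilon>)"
proof -
  have "eventually (\<lambda>z. \<forall>i<n. case z of (y, L) \<Rightarrow> hausdist (eq_cells \<mu> n x K i) (eq_cells \<mu> n y L i) < \<epsilon>)
      (config_nhds n x K)"
    using assms by (intro eventually_all_lessThan eventually_hausdist_eq_cells_less)
  then show ?thesis
    unfolding eventually_config_nhds config_ball_def by auto
qed

lemma eq_cells_perm_act: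
  assumes "\<sigma> permutes {..<n}" "x \<in> conf_space n" "convex_body K"
  shows "eq_cells \<mu> n (perm_act \<sigma> x) K i = perm_act \<sigma> (eq_cells \<mu> n x K) i"
proof -
  have "eq_weights \<mu> n K (perm_act \<sigma> x) = perm_act \<sigma> (eq_weights \<mu> n K x)"
    using assms equipart_eq_weights[OF assms(3,2)]
    by (intro eq_weights_eqI perm_act_in_conf_space equipart_weights_perm_act)
  then have "eq_cells \<mu> n (perm_act \<sigma> x) K i
      = K \<inter> power_cell n (perm_act \<sigma> x) (perm_act \<sigma> (eq_weights \<mu> n K x)) i"
    unfolding eq_cells_def by simp
  also have "\<dots> = K \<inter> power_cell n x (eq_weights \<mu> n K x) (inv \<sigma> i)"
    by (simp only: power_cell_perm_act[OF assms(1)])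
  finally show ?thesis
    by (simp add: eq_cells_def perm_act_def)
qed

lemma eq_cells_in_EMP:
  assumes "x \<in> conf_space n" "convex_body K"
  shows "eq_cells \<mu> n x K \<in> EMP \<mu> K n"
  unfolding EMP_def
proof (intro CollectI conjI allI impI)
  show "convex_body (eq_cells \<mu> n x K i)" if "i < n" for i
    using assms that by (intro convex_body_eq_cells)
  have "(\<Union>i<n. eq_cells \<mu> n x K i) = K \<inter> (\<Union>i<n. power_cell n x (eq_weights \<mu> n K x) i)"
    by (auto simp: eq_cells_def)
  then show "K = (\<Union>i<n. eq_cells \<mu> n x K i)"
    by (simp add: UN_power_cell[OF n_pos])
  show "interior (eq_cells \<mu> n x K i) \<inter> interior (eq_cells \<mu> n x K j) = {}"
    if "i < n" "j < n" "i \<noteq> j" for i j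
    using interior_power_cells_disjoint[OF assms(1) that] by (auto simp: eq_cells_def interior_Int)
  show "measure \<mu> (eq_cells \<mu> n x K i) = measure \<mu> (eq_cells \<mu> n x K j)" if "i < n" "j < n" for i j
    using equipart_eq_weights[OF assms(2,1)] that unfolding equipart_weights_def eq_cells_def by blast
qed

end

theorem theorem6p6:
  fixes \<mu> :: "'a::euclidean_space measure" and n :: nat
  assumes prob: "prob_space \<mu>"
    and borel_sets: "sets \<mu> = sets borel"
    and ac: "absolutely_continuous lborel \<mu>"
    and n_pos: "n \<ge> 1"
    and standing_fact: "\<And>K x. convex_body K \<Longrightarrow> x \<in> conf_space n \<Longrightarrow>
                          \<exists>!w. equipart_weights \<mu> n K x w"
  shows
    \<comment> \<open>continuity (sup of the component metrics as product metric)\<close>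
    "(\<forall>x K. x \<in> conf_space n \<and> convex_body K \<longrightarrow>
        (\<forall>\<epsilon>>0. \<exists>\<delta>>0. \<forall>y L. y \<in> conf_space n \<and> convex_body L
            \<and> (\<forall>i<n. dist (x i) (y i) < \<delta>) \<and> hausdist K L < \<delta> \<longrightarrow>
            (\<forall>i<n. hausdist (eq_cells \<mu> n x K i) (eq_cells \<mu> n y L i) < \<epsilon>)))
     \<and> (\<forall>\<sigma> x K. \<sigma> permutes {..<n} \<and> x \<in> conf_space n \<and> convex_body K \<longrightarrow>
          (\<forall>i<n. eq_cells \<mu> n (perm_act \<sigma> x) K i = perm_act \<sigma> (eq_cells \<mu> n x K) i))
     \<and> (\<forall>x K. x \<in> conf_space n \<and> convex_body K \<longrightarrow>
          (\<forall>i<n. convex_body (eq_cells \<mu> n x K i)) \<and> eq_cells \<mu> n x K \<in> EMP \<mu> K n)"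
proof -
  interpret equipartition \<mu> n
    by (rule equipartition.intro[OF prob equipartition_axioms.intro[OF borel_sets ac n_pos standing_fact]])
  show ?thesis
    by (intro conjI allI impI; elim conjE;
        rule eq_cells_continuous eq_cells_perm_act convex_body_eq_cells eq_cells_in_EMP; assumption)
qed

end
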